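(* Let $L>0$ and let $\rho:[0,L]\to\mathbb{R}_{>0}$ be a fixed (time-independent) normalized density, $\int_0^L\rho=1$, for which there are constants $0<d_l\le d_u<\infty$ with $d_l\le \rho(x)\le d_u$ on $[0,L]$ (and such that $\partial_x\rho$ is bounded, with $0<D_l\le\partial_x\rho\le D_u<\infty$ on $(0,L)$). Let $\Theta(x)=\int_0^x\rho(\bar x)\,d\bar x$. Consider the system $$\partial_t X=\frac{1}{\rho}\,\partial_x\!\left(\frac{\partial_x X}{\rho}\right)\ \text{on } (0,L),\qquad X(t,0)=\alpha(t),\quad X(t,L)=\beta(t),\quad X(0,x)=X_0(x),$$ $$\dot\alpha(t)=-\alpha(t),\qquad \dot\beta(t)=1-\beta(t).$$ Assume that this system is well posed, that its solution is sufficiently smooth (at least $C^2$ in the spatial variable, also as $t\to\infty$), and that $X(t,\cdot)$ belongs to the Sobolev space $H^1((0,L))$. Then for every $C^2$ initial condition $X_0$, the solution $X(t,x)$ converges pointwise to $\Theta(x)$ as $t\to\infty$, for all $x\in(0,L)$.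
   Context: $H^1((0,L))=W^{1,2}((0,L))$ denotes the Sobolev space of square-integrable functions with square-integrable weak derivative. The variable $X$ is a "pseudo-coordinate" of the agents of a stationary one-dimensional swarm with density $\rho$, and $\alpha,\beta$ are boundary inputs whose initial values are the boundary values of $X_0$. *)

theory Defs
  imports "HOL-Analysis.Analysis"
begin

definition C2_on :: "real set \<Rightarrow> (real \<Rightarrow> real) \<Rightarrow> bool" where
  "C2_on S f \<longleftrightarrow> (\<exists>f' f''.
      (\<forall>x\<in>S. (f has_real_derivative f' x) (at x within S)) \<and>
      (\<forall>x\<in>S. (f' has_real_derivative f'' x) (at x within S)) \<and>
      continuous_on S f'')"

definition Theta :: "(real \<Rightarrow> real) \<Rightarrow> real \<Rightarrow> real" where
  "Theta \<rho> x = integral {0..x} \<rho>"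

end

theory Submission
  imports Defs
begin

text \<open>
  Since \<open>\<Theta>' = \<rho>\<close>, the profile \<open>\<Theta>\<close> is a steady state of \<open>X_t = (X_x / \<rho>)_x / \<rho>\<close>
  with \<open>\<Theta> 0 = 0\<close> and \<open>\<Theta> L = 1\<close>, the limits of the boundary inputs, which converge
  like \<open>exp (-t)\<close>. The deviation is controlled by the barrier
  \<open>A exp (-\<mu> t) (2 - \<Theta>\<^sup>2)\<close> with \<open>\<mu> < 1\<close>: since \<open>((\<Theta>\<^sup>2)_x / \<rho>)_x / \<rho> = 2\<close>,
  at an interior maximum of \<open>\<plusminus>(X - \<Theta>) - A exp (-\<mu> t) (2 - \<Theta>\<^sup>2)\<close> the PDE makes this
  function strictly decreasing in time, contradicting maximality over earlier times.
  The weak maximum principle therefore gives \<open>\<bar>X - \<Theta>\<bar> \<le> 2 A exp (-\<mu> t)\<close>.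
\<close>

lemma C2_on_imp_continuous_on: "C2_on S f \<Longrightarrow> continuous_on S f"
  unfolding C2_on_def continuous_on_eq_continuous_within
  using DERIV_continuous by blast

lemma C2_on_Icc_interiorE:
  assumes "C2_on {a..b} f"
  obtains f'' where "\<And>y. y \<in> {a<..<b} \<Longrightarrow> (f has_real_derivative deriv f y) (at y)"
    and "\<And>y. y \<in> {a<..<b} \<Longrightarrow> (deriv f has_real_derivative f'' y) (at y)"
proof -
  obtain f' f'' where f': "\<forall>y\<in>{a..b}. (f has_real_derivative f' y) (at y within {a..b})"
    and f'': "\<forall>y\<in>{a..b}. (f' has_real_derivative f'' y) (at y within {a..b})"
    using assms unfolding C2_on_def by blast
  have at_eq: "at y within {a..b} = at y" if "y \<in> {a<..<b}" for y
    using that by (intro at_within_interior) simp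
  have Df: "(f has_real_derivative f' y) (at y)" if "y \<in> {a<..<b}" for y
    using f'[rule_format, of y] that at_eq[OF that] by simp
  have deriv_eq: "deriv f y = f' y" if "y \<in> {a<..<b}" for y
    using Df[OF that] by (rule DERIV_imp_deriv)
  show thesis
  proof
    fix y assume y: "y \<in> {a<..<b}"
    show "(f has_real_derivative deriv f y) (at y)"
      using Df[OF y] deriv_eq[OF y] by simp
    have "(f' has_real_derivative f'' y) (at y)"
      using f''[rule_format, of y] y at_eq[OF y] by simp
    then show "(deriv f has_real_derivative f'' y) (at y)"
      by (rule has_field_derivative_transform_within_open[where S="{a<..<b}"]) (use y deriv_eq in auto)
  qed
qed

lemma Theta_has_real_derivative_within:
  assumes "continuous_on {0..L} \<rho>" "y \<in> {0..L}"
  shows "(Theta \<rho> has_real_derivative \<rho> y) (at y within {0..L})"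
  unfolding Theta_def[abs_def] by (rule integral_has_real_derivative[OF assms])

lemma Theta_has_real_derivative:
  assumes "continuous_on {0..L} \<rho>" "y \<in> {0<..<L}"
  shows "(Theta \<rho> has_real_derivative \<rho> y) (at y)"
proof -
  have "at y within {0..L} = at y"
    using assms(2) by (intro at_within_interior) simp
  with Theta_has_real_derivative_within[OF assms(1), of y] assms(2) show ?thesis by simp
qed

lemma continuous_on_Theta:
  assumes "continuous_on {0..L} \<rho>"
  shows "continuous_on {0..L} (Theta \<rho>)"
  unfolding continuous_on_eq_continuous_within
  using Theta_has_real_derivative_within[OF assms] DERIV_continuous by blast

lemma Theta_right_end: "(\<rho> has_integral 1) {0..L} \<Longrightarrow> Theta \<rho> L = 1"
  by (simp add: Theta_def integral_unique)

lemma abs_Theta_le_1: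
  assumes "continuous_on {0..L} \<rho>" "(\<rho> has_integral 1) {0..L}"
    and "\<And>y. y \<in> {0..L} \<Longrightarrow> 0 \<le> \<rho> y" "x \<in> {0..L}"
  shows "\<bar>Theta \<rho> x\<bar> \<le> 1"
proof -
  have int: "\<rho> integrable_on {0..y}" if "y \<in> {0..L}" for y
    using that by (intro integrable_continuous_real continuous_on_subset[OF assms(1)]) auto
  have "0 \<le> Theta \<rho> x"
    unfolding Theta_def using int[OF assms(4)] assms(3,4) by (intro integral_nonneg) auto
  moreover have "Theta \<rho> x \<le> Theta \<rho> L"
    unfolding Theta_def
  proof (rule integral_subset_le)
    show "{0..x} \<subseteq> {0..L}" using assms(4) by simp
  qed (use int[OF assms(4)] int[of L] assms(3,4) in auto)
  ultimately show ?thesis using Theta_right_end[OF assms(2)] by simp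
qed

lemma relaxation_ode_solution:
  fixes f :: "real \<Rightarrow> real"
  assumes ode: "\<And>t. t \<ge> 0 \<Longrightarrow> (f has_real_derivative c - f t) (at t within {0..})"
    and "s \<ge> 0"
  shows "f s - c = (f 0 - c) * exp (- s)"
proof -
  have "\<exists>K. \<forall>t\<in>{0::real..}. (f t - c) * exp t = K"
  proof (rule has_field_derivative_zero_constant)
    fix t :: real assume "t \<in> {0..}"
    then have "((\<lambda>t. (f t - c) * exp t) has_real_derivative
        (c - f t) * exp t + (f t - c) * exp t) (at t within {0..})"
      using ode by (auto intro!: derivative_eq_intros)
    then show "((\<lambda>t. (f t - c) * exp t) has_real_derivative 0) (at t within {0..})"
      by (simp add: algebra_simps)
  qed simp
  then have "(f s - c) * exp s = (f 0 - c) * exp 0"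
    using \<open>s \<ge> 0\<close> by force
  then show ?thesis by (simp add: exp_minus field_simps)
qed

lemma relaxation_ode_decay:
  fixes f :: "real \<Rightarrow> real"
  assumes "\<And>t. t \<ge> 0 \<Longrightarrow> (f has_real_derivative c - f t) (at t within {0..})"
    and "\<bar>f 0 - c\<bar> \<le> A" "\<mu> \<le> 1" "t \<ge> 0"
  shows "\<bar>f t - c\<bar> \<le> A * exp (- \<mu> * t)"
proof -
  have "\<bar>f t - c\<bar> = \<bar>f 0 - c\<bar> * exp (- t)"
    using relaxation_ode_solution[OF assms(1,4)] by (simp add: abs_mult)
  also have "\<dots> \<le> A * exp (- \<mu> * t)"
    using assms(2-4) mult_right_mono[of \<mu> 1 t] by (intro mult_mono) auto
  finally show ?thesis .
qed

lemma interior_max_imp_deriv_of_factor_nonpos: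
  fixes k r w :: "real \<Rightarrow> real"
  assumes x: "a < x" "x < b"
    and k_deriv: "\<And>y. y \<in> {a<..<b} \<Longrightarrow> (k has_real_derivative r y * w y) (at y)"
    and w_pos: "\<And>y. y \<in> {a<..<b} \<Longrightarrow> 0 < w y"
    and r_deriv: "(r has_real_derivative r') (at x)"
    and k_max: "\<And>y. y \<in> {a<..<b} \<Longrightarrow> k y \<le> k x"
  shows "r' \<le> 0"
proof (rule ccontr)
  assume "\<not> r' \<le> 0"
  then obtain d where d: "d > 0" and r_inc: "\<forall>h>0. x + h \<in> UNIV \<longrightarrow> h < d \<longrightarrow> r x < r (x + h)"
    using has_real_derivative_pos_inc_right[OF r_deriv] by auto
  have "r x * w x = 0"
    by (rule DERIV_local_max[OF k_deriv, where d="min (x - a) (b - x)"])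
       (use x k_max in \<open>auto simp: abs_if\<close>)
  then have r0: "r x = 0" using w_pos[of x] x by simp
  define h where "h = min (d / 2) ((b - x) / 2)"
  have h: "0 < h" "h < d" "x + h < b" using d x by (auto simp: h_def min_def field_simps)
  have "k x < k (x + h)"
  proof (rule DERIV_pos_imp_increasing_open[of x "x + h" k])
    show "x < x + h" using h by simp
  next
    fix z assume z: "x < z" "z < x + h"
    then have z_in: "z \<in> {a<..<b}" using x h by simp
    have "r x < r (x + (z - x))" using r_inc[rule_format, of "z - x"] z h by simp
    then have "0 < r z" using r0 by simp
    then show "\<exists>y. (k has_real_derivative y) (at z) \<and> 0 < y"
      using k_deriv[OF z_in] w_pos[OF z_in] by (intro exI[of _ "r z * w z"]) simp
  next
    show "continuous_on {x..x + h} k"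
    proof (rule has_real_derivative_imp_continuous_on)
      fix z assume "z \<in> {x..x + h}"
      then have "z \<in> {a<..<b}" using x h by simp
      then show "(k has_real_derivative r z * w z) (at z)" by (rule k_deriv)
    qed
  qed
  moreover have "k (x + h) \<le> k x" using x h by (intro k_max) simp
  ultimately show False by simp
qed

lemma left_max_imp_deriv_nonneg:
  fixes f :: "real \<Rightarrow> real"
  assumes f_deriv: "(f has_real_derivative l) (at t)" and "a < t"
    and f_max: "\<And>s. s \<in> {a..t} \<Longrightarrow> f s \<le> f t"
  shows "0 \<le> l"
proof (rule ccontr)
  assume "\<not> 0 \<le> l"
  then obtain d where "d > 0" and dec: "\<forall>h>0. t - h \<in> UNIV \<longrightarrow> h < d \<longrightarrow> f t < f (t - h)"
    using has_real_derivative_neg_dec_left[OF f_deriv] by auto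
  define h where "h = min (d / 2) (t - a)"
  have "0 < h" "h < d" "t - h \<in> {a..t}"
    using \<open>d > 0\<close> \<open>a < t\<close> by (auto simp: h_def)
  with dec[rule_format, of h] have "f t < f (t - h)" by simp
  with f_max[of "t - h"] \<open>t - h \<in> {a..t}\<close> show False by simp
qed

lemma parabolic_maximum_principle:
  fixes u :: "real \<Rightarrow> real \<Rightarrow> real"
  assumes cont: "continuous_on ({0..T} \<times> {0..L}) (\<lambda>(t, x). u t x)"
    and initial: "\<And>x. x \<in> {0..L} \<Longrightarrow> u 0 x \<le> 0"
    and boundary: "\<And>t. t \<in> {0..T} \<Longrightarrow> u t 0 \<le> 0 \<and> u t L \<le> 0"
    and no_interior_max: "\<And>t x. t \<in> {0<..T} \<Longrightarrow> x \<in> {0<..<L} \<Longrightarrow>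
        (\<And>y. y \<in> {0<..<L} \<Longrightarrow> u t y \<le> u t x) \<Longrightarrow>
        (\<And>s. s \<in> {0..t} \<Longrightarrow> u s x \<le> u t x) \<Longrightarrow> False"
    and "t \<in> {0..T}" "x \<in> {0..L}"
  shows "u t x \<le> 0"
proof -
  have "compact ({0..T} \<times> {0..L})" by (intro compact_Times compact_Icc)
  moreover have "(t, x) \<in> {0..T} \<times> {0..L}" using assms(5,6) by simp
  ultimately obtain p where p: "p \<in> {0..T} \<times> {0..L}"
    and p_max: "\<And>q. q \<in> {0..T} \<times> {0..L} \<Longrightarrow> (\<lambda>(t, x). u t x) q \<le> (\<lambda>(t, x). u t x) p"
    using continuous_attains_sup[OF _ _ cont] by blast
  obtain t0 x0 where p_eq: "p = (t0, x0)" by (cases p)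
  have max: "u s y \<le> u t0 x0" if "s \<in> {0..T}" "y \<in> {0..L}" for s y
    using p_max[of "(s, y)"] that p_eq by simp
  show ?thesis
  proof (cases "u t0 x0 \<le> 0")
    case True
    then show ?thesis using max assms(5,6) by force
  next
    case False
    have t0: "t0 \<in> {0..T}" and x0: "x0 \<in> {0..L}" using p p_eq by auto
    have "t0 \<noteq> 0" using False initial x0 by auto
    moreover have "x0 \<noteq> 0" "x0 \<noteq> L" using False boundary t0 by auto
    ultimately have "t0 \<in> {0<..T}" "x0 \<in> {0<..<L}" using t0 x0 by auto
    then show ?thesis
      by (rule no_interior_max[THEN FalseE]) (use max t0 x0 in auto)
  qed
qed

lemma flux_operator_at_barrier_max:
  fixes f \<rho> \<rho>' \<Theta> :: "real \<Rightarrow> real" and c \<sigma> L x :: real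
  assumes x: "x \<in> {0<..<L}"
    and rho_pos: "\<And>y. y \<in> {0<..<L} \<Longrightarrow> 0 < \<rho> y"
    and rho_deriv: "(\<rho> has_real_derivative \<rho>' x) (at x)"
    and Theta_deriv: "\<And>y. y \<in> {0<..<L} \<Longrightarrow> (\<Theta> has_real_derivative \<rho> y) (at y)"
    and f_C2: "C2_on {0..L} f"
    and space_max: "\<And>y. y \<in> {0<..<L} \<Longrightarrow>
        \<sigma> * (f y - \<Theta> y) - c * (2 - (\<Theta> y)\<^sup>2) \<le> \<sigma> * (f x - \<Theta> x) - c * (2 - (\<Theta> x)\<^sup>2)"
  shows "\<sigma> * deriv (\<lambda>y. deriv f y / \<rho> y) x / \<rho> x \<le> - 2 * c"
proof -
  obtain f'' where Df: "\<And>y. y \<in> {0<..<L} \<Longrightarrow> (f has_real_derivative deriv f y) (at y)"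
    and D2f: "\<And>y. y \<in> {0<..<L} \<Longrightarrow> (deriv f has_real_derivative f'' y) (at y)"
    using C2_on_Icc_interiorE[OF f_C2] by blast
  define q where "q y = deriv f y / \<rho> y" for y
  define q' where "q' = (f'' x * \<rho> x - deriv f x * \<rho>' x) / (\<rho> x * \<rho> x)"
  have q_deriv: "(q has_real_derivative q') (at x)"
    unfolding q_def[abs_def] q'_def using D2f[OF x] rho_deriv rho_pos[OF x]
    by (intro DERIV_divide) auto
  define r where "r y = \<sigma> * (q y - 1) + 2 * c * \<Theta> y" for y
  define k where "k y = \<sigma> * (f y - \<Theta> y) - c * (2 - (\<Theta> y)\<^sup>2)" for y
  have k_deriv: "(k has_real_derivative r y * \<rho> y) (at y)" if y: "y \<in> {0<..<L}" for y
  proof -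
    have "(k has_real_derivative
        \<sigma> * (deriv f y - \<rho> y) - c * (- (2 * \<Theta> y * \<rho> y))) (at y)"
      unfolding k_def[abs_def] using Df[OF y] Theta_deriv[OF y]
      by (auto intro!: derivative_eq_intros)
    moreover have "\<sigma> * (deriv f y - \<rho> y) - c * (- (2 * \<Theta> y * \<rho> y)) = r y * \<rho> y"
      using rho_pos[OF y] by (simp add: r_def q_def field_simps)
    ultimately show ?thesis by simp
  qed
  have r_deriv: "(r has_real_derivative \<sigma> * q' + 2 * c * \<rho> x) (at x)"
    unfolding r_def[abs_def] using q_deriv Theta_deriv[OF x]
    by (auto intro!: derivative_eq_intros)
  have "\<sigma> * q' + 2 * c * \<rho> x \<le> 0"
  proof (rule interior_max_imp_deriv_of_factor_nonpos[OF _ _ k_deriv rho_pos r_deriv])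
    show "k y \<le> k x" if "y \<in> {0<..<L}" for y
      using space_max[OF that] by (simp add: k_def)
  qed (use x in auto)
  moreover have "deriv q x = q'" using q_deriv by (rule DERIV_imp_deriv)
  ultimately show ?thesis
    using rho_pos[OF x] by (simp add: q_def[abs_def] field_simps)
qed

lemma barrier_has_no_interior_max:
  fixes \<rho> \<rho>' \<Theta> :: "real \<Rightarrow> real" and X :: "real \<Rightarrow> real \<Rightarrow> real"
    and A \<mu> \<sigma> L t x :: real
  defines "W \<equiv> \<lambda>s y. \<sigma> * (X s y - \<Theta> y) - A * exp (- \<mu> * s) * (2 - (\<Theta> y)\<^sup>2)"
  assumes "0 < A" "\<mu> < 1"
    and t: "0 < t" and x: "x \<in> {0<..<L}"
    and rho_pos: "\<And>y. y \<in> {0<..<L} \<Longrightarrow> 0 < \<rho> y"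
    and rho_deriv: "(\<rho> has_real_derivative \<rho>' x) (at x)"
    and Theta_deriv: "\<And>y. y \<in> {0<..<L} \<Longrightarrow> (\<Theta> has_real_derivative \<rho> y) (at y)"
    and Theta_x: "\<bar>\<Theta> x\<bar> \<le> 1"
    and X_C2: "C2_on {0..L} (X t)"
    and X_pde: "((\<lambda>s. X s x) has_real_derivative
                  (1 / \<rho> x) * deriv (\<lambda>y. deriv (X t) y / \<rho> y) x) (at t)"
    and space_max: "\<And>y. y \<in> {0<..<L} \<Longrightarrow> W t y \<le> W t x"
    and time_max: "\<And>s. s \<in> {0..t} \<Longrightarrow> W s x \<le> W t x"
  shows False
proof -
  define c where "c = A * exp (- \<mu> * t)"
  define D where "D = deriv (\<lambda>y. deriv (X t) y / \<rho> y) x"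
  have "0 < c" using \<open>0 < A\<close> by (simp add: c_def)
  have spatial: "\<sigma> * D / \<rho> x \<le> - 2 * c"
    unfolding D_def using x rho_pos rho_deriv Theta_deriv X_C2 space_max
    by (intro flux_operator_at_barrier_max) (auto simp: W_def c_def)
  have "((\<lambda>s. W s x) has_real_derivative \<sigma> * D / \<rho> x + \<mu> * c * (2 - (\<Theta> x)\<^sup>2)) (at t)"
    using X_pde unfolding W_def c_def D_def by (auto intro!: derivative_eq_intros)
  then have temporal: "0 \<le> \<sigma> * D / \<rho> x + \<mu> * c * (2 - (\<Theta> x)\<^sup>2)"
    using t time_max by (rule left_max_imp_deriv_nonneg)
  have g: "0 \<le> 2 - (\<Theta> x)\<^sup>2" "2 - (\<Theta> x)\<^sup>2 \<le> 2"
    using Theta_x abs_square_le_1[of "\<Theta> x"] by simp_all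
  have "\<mu> * (2 - (\<Theta> x)\<^sup>2) < 2"
  proof (cases "0 \<le> \<mu>")
    case True
    then have "\<mu> * (2 - (\<Theta> x)\<^sup>2) \<le> \<mu> * 2" using g by (intro mult_left_mono)
    then show ?thesis using \<open>\<mu> < 1\<close> by simp
  next
    case False
    then have "\<mu> * (2 - (\<Theta> x)\<^sup>2) \<le> 0" using g by (simp add: mult_nonpos_nonneg)
    then show ?thesis by simp
  qed
  then have "\<mu> * c * (2 - (\<Theta> x)\<^sup>2) < 2 * c"
    using \<open>0 < c\<close> by (simp add: mult.commute mult.left_commute)
  with spatial temporal show False by linarith
qed

context
  fixes L A \<mu> :: real and \<rho> \<rho>' \<Theta> :: "real \<Rightarrow> real" and X :: "real \<Rightarrow> real \<Rightarrow> real"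
  assumes A_pos: "0 < A" and rate: "\<mu> < 1"
    and rho_pos: "\<And>y. y \<in> {0<..<L} \<Longrightarrow> 0 < \<rho> y"
    and rho_deriv: "\<And>y. y \<in> {0<..<L} \<Longrightarrow> (\<rho> has_real_derivative \<rho>' y) (at y)"
    and Theta_cont: "continuous_on {0..L} \<Theta>"
    and Theta_deriv: "\<And>y. y \<in> {0<..<L} \<Longrightarrow> (\<Theta> has_real_derivative \<rho> y) (at y)"
    and Theta_bound: "\<And>y. y \<in> {0..L} \<Longrightarrow> \<bar>\<Theta> y\<bar> \<le> 1"
    and X_cont: "continuous_on ({0..} \<times> {0..L}) (\<lambda>(t, x). X t x)"
    and X_C2: "\<And>t. 0 < t \<Longrightarrow> C2_on {0..L} (X t)"
    and X_pde: "\<And>t x. 0 < t \<Longrightarrow> x \<in> {0<..<L} \<Longrightarrow> ((\<lambda>s. X s x) has_real_derivative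
                  (1 / \<rho> x) * deriv (\<lambda>y. deriv (X t) y / \<rho> y) x) (at t)"
    and initial_bound: "\<And>x. x \<in> {0..L} \<Longrightarrow> \<bar>X 0 x - \<Theta> x\<bar> \<le> A"
    and boundary_decay: "\<And>t. 0 \<le> t \<Longrightarrow>
        \<bar>X t 0 - \<Theta> 0\<bar> \<le> A * exp (- \<mu> * t) \<and> \<bar>X t L - \<Theta> L\<bar> \<le> A * exp (- \<mu> * t)"
begin

lemma barrier_bound:
  assumes "\<bar>\<sigma>\<bar> = 1" "0 \<le> t" "x \<in> {0..L}"
  shows "\<sigma> * (X t x - \<Theta> x) \<le> A * exp (- \<mu> * t) * (2 - (\<Theta> x)\<^sup>2)"
proof -
  define W where "W s y = \<sigma> * (X s y - \<Theta> y) - A * exp (- \<mu> * s) * (2 - (\<Theta> y)\<^sup>2)" for s y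
  have sigma_le: "\<sigma> * z \<le> \<bar>z\<bar>" for z
    using \<open>\<bar>\<sigma>\<bar> = 1\<close> by (auto simp: abs_if split: if_splits)
  have g_ge: "1 \<le> 2 - (\<Theta> y)\<^sup>2" if "y \<in> {0..L}" for y
    using Theta_bound[OF that] abs_square_le_1[of "\<Theta> y"] by simp
  have bounded_by_barrier: "W s y \<le> 0"
    if "\<bar>X s y - \<Theta> y\<bar> \<le> A * exp (- \<mu> * s)" "y \<in> {0..L}" for s y
  proof -
    have "\<sigma> * (X s y - \<Theta> y) \<le> A * exp (- \<mu> * s)"
      using sigma_le[of "X s y - \<Theta> y"] that(1) by linarith
    also have "\<dots> \<le> A * exp (- \<mu> * s) * (2 - (\<Theta> y)\<^sup>2)"
      using g_ge[OF that(2)] A_pos by simp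
    finally show ?thesis by (simp add: W_def)
  qed
  have "W t x \<le> 0"
  proof (rule parabolic_maximum_principle[where u = W and T = t and L = L])
    have "{0..t} \<times> {0..L} \<subseteq> {0..} \<times> {0..L}" by auto
    from continuous_on_subset[OF X_cont this]
    have "continuous_on ({0..t} \<times> {0..L}) (\<lambda>p. X (fst p) (snd p))"
      by (simp add: case_prod_beta)
    moreover have "continuous_on ({0..t} \<times> {0..L}) (\<lambda>p. \<Theta> (snd p))"
      by (rule continuous_on_compose2[OF Theta_cont]) (auto intro: continuous_intros)
    ultimately show "continuous_on ({0..t} \<times> {0..L}) (\<lambda>(s, y). W s y)"
      unfolding W_def case_prod_beta by (intro continuous_intros)
  next
    show "W 0 y \<le> 0" if "y \<in> {0..L}" for y
      using bounded_by_barrier initial_bound that by simp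
  next
    show "W s 0 \<le> 0 \<and> W s L \<le> 0" if "s \<in> {0..t}" for s
      using bounded_by_barrier[of s 0] bounded_by_barrier[of s L] boundary_decay[of s] that assms(3)
      by auto
  next
    fix s y
    assume s: "s \<in> {0<..t}" and y: "y \<in> {0<..<L}"
      and space_max: "\<And>z. z \<in> {0<..<L} \<Longrightarrow> W s z \<le> W s y"
      and time_max: "\<And>r. r \<in> {0..s} \<Longrightarrow> W r y \<le> W s y"
    have "0 < s" using s by simp
    show False
    proof (rule barrier_has_no_interior_max[where \<rho> = \<rho> and \<rho>' = \<rho>' and \<Theta> = \<Theta> and X = X
          and t = s and x = y and L = L and A = A and \<mu> = \<mu> and \<sigma> = \<sigma>])
      show "\<bar>\<Theta> y\<bar> \<le> 1" using Theta_bound y by simp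
    qed (use A_pos rate \<open>0 < s\<close> y rho_pos rho_deriv Theta_deriv X_C2 X_pde
           space_max time_max in \<open>simp_all add: W_def\<close>)
  qed (use assms in auto)
  then show ?thesis by (simp add: W_def)
qed

lemma exponential_decay_estimate:
  assumes "0 \<le> t" "x \<in> {0..L}"
  shows "\<bar>X t x - \<Theta> x\<bar> \<le> 2 * A * exp (- \<mu> * t)"
proof -
  have "A * exp (- \<mu> * t) * (2 - (\<Theta> x)\<^sup>2) \<le> A * exp (- \<mu> * t) * 2"
    using A_pos by (intro mult_left_mono) auto
  then show ?thesis
    using barrier_bound[of 1 t x] barrier_bound[of "-1" t x] assms by (simp add: abs_le_iff)
qed

end

lemma tendsto_of_exponential_bound:
  fixes f :: "real \<Rightarrow> real"
  assumes "0 < \<mu>" and bound: "\<And>t. t \<ge> T \<Longrightarrow> \<bar>f t - l\<bar> \<le> C * exp (- \<mu> * t)"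
  shows "(f \<longlongrightarrow> l) at_top"
proof -
  have "filterlim (\<lambda>t. - \<mu> * t) at_bot at_top"
    using \<open>0 < \<mu>\<close> by (intro filterlim_tendsto_neg_mult_at_bot[OF tendsto_const _ filterlim_ident]) simp
  then have majorant_null: "((\<lambda>t. C * exp (- \<mu> * t)) \<longlongrightarrow> 0) at_top"
    using tendsto_mult_right_zero filterlim_compose[OF exp_at_bot] by blast
  have "\<forall>\<^sub>F t in at_top. norm (f t - l) \<le> C * exp (- \<mu> * t)"
    using eventually_ge_at_top[of T] by (rule eventually_mono) (simp only: real_norm_def bound)
  then have "((\<lambda>t. f t - l) \<longlongrightarrow> 0) at_top"
    using majorant_null by (rule Lim_null_comparison)
  then show ?thesis by (rule LIM_zero_cancel)
qed

theorem mainTheorem2: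
  fixes L d_l d_u D_l D_u :: real
    and \<rho> \<rho>' :: "real \<Rightarrow> real"
    and X0 \<alpha> \<beta> :: "real \<Rightarrow> real"
    and X :: "real \<Rightarrow> real \<Rightarrow> real"
  assumes L_pos: "L > 0"
    and rho_cont: "continuous_on {0..L} \<rho>"
    and rho_int: "(\<rho> has_integral 1) {0..L}"
    and d_bounds: "0 < d_l" "d_l \<le> d_u"
    and rho_bounds: "\<forall>x\<in>{0..L}. d_l \<le> \<rho> x \<and> \<rho> x \<le> d_u"
    and D_bounds: "0 < D_l" "D_l \<le> D_u"
    and rho_deriv: "\<forall>x\<in>{0<..<L}. (\<rho> has_real_derivative \<rho>' x) (at x)"
    and rho'_bounds: "\<forall>x\<in>{0<..<L}. D_l \<le> \<rho>' x \<and> \<rho>' x \<le> D_u"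
    \<comment> \<open>C^2 initial condition\<close>
    and X0_C2: "C2_on {0..L} X0"
    \<comment> \<open>boundary inputs\<close>
    and alpha_ode: "\<forall>t\<ge>0. (\<alpha> has_real_derivative (- \<alpha> t)) (at t within {0..})"
    and beta_ode: "\<forall>t\<ge>0. (\<beta> has_real_derivative (1 - \<beta> t)) (at t within {0..})"
    and alpha_init: "\<alpha> 0 = X0 0"
    and beta_init: "\<beta> 0 = X0 L"
    \<comment> \<open>regularity of the (classical) solution\<close>
    and X_cont: "continuous_on ({0..} \<times> {0..L}) (\<lambda>(t, x). X t x)"
    and X_C2: "\<forall>t\<ge>0. C2_on {0..L} (\<lambda>x. X t x)"
    and X_time_diff: "\<forall>t>0. \<forall>x\<in>{0<..<L}. (\<lambda>s. X s x) differentiable (at t)"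
    \<comment> \<open>the PDE\<close>
    and X_pde: "\<forall>t>0. \<forall>x\<in>{0<..<L}.
        ((\<lambda>s. X s x) has_real_derivative
           (1 / \<rho> x) * deriv (\<lambda>y. deriv (\<lambda>z. X t z) y / \<rho> y) x) (at t)"
    \<comment> \<open>boundary and initial conditions\<close>
    and X_left: "\<forall>t\<ge>0. X t 0 = \<alpha> t"
    and X_right: "\<forall>t\<ge>0. X t L = \<beta> t"
    and X_init: "\<forall>x\<in>{0..L}. X 0 x = X0 x"
  shows "\<forall>x\<in>{0<..<L}. ((\<lambda>t. X t x) \<longlongrightarrow> Theta \<rho> x) at_top"
proof -
  \<comment> \<open>Only the existence of \<open>\<rho>'\<close> enters.\<close>
  have rho_pos: "0 < \<rho> y" if "y \<in> {0..L}" for y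
    using rho_bounds d_bounds that by force
  have "continuous_on {0..L} (\<lambda>x. X0 x - Theta \<rho> x)"
    using C2_on_imp_continuous_on[OF X0_C2] continuous_on_Theta[OF rho_cont]
    by (intro continuous_intros)
  then obtain M where "0 \<le> M" and M: "\<And>x. x \<in> {0..L} \<Longrightarrow> norm (X0 x - Theta \<rho> x) \<le> M"
    by (rule continuous_on_compact_bound[OF compact_Icc]) blast
  define A where "A = \<bar>\<alpha> 0\<bar> + \<bar>\<beta> 0 - 1\<bar> + M + 1"
  have decay: "\<bar>X t x - Theta \<rho> x\<bar> \<le> 2 * A * exp (- (1/2) * t)"
    if "0 \<le> t" "x \<in> {0..L}" for t x
  proof (rule exponential_decay_estimate[where L = L and A = A and \<mu> = "1/2" and \<rho> = \<rho>
        and \<rho>' = \<rho>' and \<Theta> = "Theta \<rho>" and X = X])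
    fix s :: real assume "0 \<le> s"
    have "\<bar>\<alpha> s - 0\<bar> \<le> A * exp (- (1/2) * s)"
      by (rule relaxation_ode_decay) (use alpha_ode \<open>0 \<le> s\<close> \<open>0 \<le> M\<close> in \<open>auto simp: A_def\<close>)
    moreover have "\<bar>\<beta> s - 1\<bar> \<le> A * exp (- (1/2) * s)"
      by (rule relaxation_ode_decay) (use beta_ode \<open>0 \<le> s\<close> \<open>0 \<le> M\<close> in \<open>auto simp: A_def\<close>)
    ultimately show "\<bar>X s 0 - Theta \<rho> 0\<bar> \<le> A * exp (- (1/2) * s) \<and>
        \<bar>X s L - Theta \<rho> L\<bar> \<le> A * exp (- (1/2) * s)"
      using X_left X_right \<open>0 \<le> s\<close> Theta_right_end[OF rho_int] by (simp add: Theta_def)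
  next
    show "\<bar>Theta \<rho> y\<bar> \<le> 1" if "y \<in> {0..L}" for y
      using rho_pos that by (intro abs_Theta_le_1[OF rho_cont rho_int]) (auto intro: less_imp_le)
    show "\<bar>X 0 y - Theta \<rho> y\<bar> \<le> A" if "y \<in> {0..L}" for y
      using M[OF that] X_init that abs_ge_zero[of "\<alpha> 0"] abs_ge_zero[of "\<beta> 0 - 1"]
      by (simp add: A_def)
  qed (use that rho_pos rho_deriv X_cont X_C2 X_pde \<open>0 \<le> M\<close>
         in \<open>auto simp: A_def continuous_on_Theta[OF rho_cont] Theta_has_real_derivative[OF rho_cont]\<close>)
  show ?thesis
    using decay by (auto intro!: tendsto_of_exponential_bound[where \<mu> = "1/2" and C = "2 * A" and T = 0])
qed

end
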